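(* Let $\mathcal{A}$ be an algebra in a functional language $\mathcal{L}$, $\mathcal{B}$ an $\mathcal{A}$-algebra, and $\Lambda$ a direct system of formulas in $\mathcal{L}_{\mathcal{A}}$ such that every formula of $\Lambda$ is realizable in $\mathcal{B}$. Then the limit algebra $\mathcal{B}_\Lambda=L(\Lambda)$ is an $\mathcal{A}$-algebra, i.e. $\mathcal{B}_\Lambda\models\mathrm{Diag}(\mathcal{A})$.
   Context: Functional language: operation symbols $F$ (arity $n_F$) and constants only. $\mathcal{L}_{\mathcal{A}}=\mathcal{L}\cup\{c_a:a\in A\}$. $\mathrm{Diag}(\mathcal{A})$ is the set of atomic $\mathcal{L}_{\mathcal{A}}$-sentences and negations of atomic $\mathcal{L}_{\mathcal{A}}$-sentences true in $\mathcal{A}$ (with $c_a$ interpreted as $a$); an $\mathcal{A}$-algebra is an $\mathcal{L}_{\mathcal{A}}$-algebra satisfying $\mathrm{Diag}(\mathcal{A})$ (equivalently, $a\mapsto c_a$ is an embedding of $\mathcal{A}$). For a functional language $\mathcal{L}^*$ (here $\mathcal{L}^*=\mathcal{L}_{\mathcal{A}}$): a diagram-formula in a finite reduct $\mathcal{L}'$ in finite variables $X$ is a conjunction of atomic formulas and negations such that $\neg(x=y)$ is a conjunct for distinct $x,y\in X$, for each $F\in\mathcal{L}'$ and $(x_0,\dots,x_{n_F})\in X^{n_F+1}$ exactly one of $F(x_1,\dots,x_{n_F})=x_0$ and its negation is a conjunct, and for each constant $c\in\mathcal{L}'$ and $x\in X$ exactly one of $x=c$, $\neg(x=c)$ is a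 conjunct. A direct system of formulas $\Lambda=(I,\varphi_i,\gamma_{ij})$: $(I,\le)$ directed; $\varphi_i$ consistent diagram-formulas in finite reducts $\mathcal{L}_i\subseteq\mathcal{L}^*$ and finite variables $X_i$; maps $\gamma_{ij}:X_i\to X_j$ ($i\le j$) with $\gamma_{ii}=\mathrm{id}$, $\gamma_{jk}\gamma_{ij}=\gamma_{ik}$, conjuncts of $\varphi_i(\gamma_{ij}(X_i))$ are conjuncts of $\varphi_j$; every constant of $\mathcal{L}^*$ appears in a conjunct $x=c$ of some $\varphi_i$; for every $F,i,(x_1,\dots,x_{n_F})\in X_i^{n_F}$ some $j\ge i$ has a conjunct $F(\gamma_{ij}(x_1),\dots)=x_j$. The limit algebra $L(\Lambda)$ (an $\mathcal{L}^*$-algebra) has universe $\{(x,i):x\in X_i\}/\!\equiv$, $(x,i)\equiv(y,j)$ iff $\gamma_{ik}(x)=\gamma_{jk}(y)$ for some $k\ge i,j$, with constants and operations read off from the conjuncts $x=c$ and $F(\dots)=x_j$. $\varphi_i$ is realizable in $\mathcal{B}$ if it is true under some assignment $X_i\to B$. *)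

theory Defs
  imports Main
begin

record ('f,'c) lang =
  ops   :: "'f set"
  csts  :: "'c set"
  arity :: "'f \<Rightarrow> nat"

record ('f,'c,'u) alg =
  univ :: "'u set"
  fn   :: "'f \<Rightarrow> 'u list \<Rightarrow> 'u"
  cn   :: "'c \<Rightarrow> 'u"

definition is_algebra :: "('f,'c) lang \<Rightarrow> ('f,'c,'u) alg \<Rightarrow> bool" where
  "is_algebra L M \<longleftrightarrow>
     (\<forall>F\<in>ops L. \<forall>xs. set xs \<subseteq> univ M \<and> length xs = arity L F \<longrightarrow> fn M F xs \<in> univ M)
   \<and> (\<forall>c\<in>csts L. cn M c \<in> univ M)"

datatype ('f,'c) gterm = GC 'c | GA 'f "('f,'c) gterm list"

fun wf_gterm :: "('f,'c) lang \<Rightarrow> ('f,'c) gterm \<Rightarrow> bool" where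
  "wf_gterm L (GC c) = (c \<in> csts L)"
| "wf_gterm L (GA F ts) = (F \<in> ops L \<and> length ts = arity L F \<and> (\<forall>t\<in>set ts. wf_gterm L t))"

fun geval :: "('f,'c,'u) alg \<Rightarrow> ('f,'c) gterm \<Rightarrow> 'u" where
  "geval M (GC c) = cn M c"
| "geval M (GA F ts) = fn M F (map (geval M) ts)"

text \<open>The language \<open>L_A = L \<union> {c_a : a \<in> A}\<close>: constants \<open>Inl c\<close> (old) and \<open>Inr a\<close> (= c_a).\<close>
definition langA :: "('f,'c) lang \<Rightarrow> ('f,'c,'a) alg \<Rightarrow> ('f, 'c + 'a) lang" where
  "langA L A = \<lparr>ops = ops L, csts = Inl ` csts L \<union> Inr ` univ A, arity = arity L\<rparr>"

definition expandA :: "('f,'c,'a) alg \<Rightarrow> ('f, 'c + 'a, 'a) alg" where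
  "expandA A = \<lparr>univ = univ A, fn = fn A, cn = (\<lambda>d. case d of Inl c \<Rightarrow> cn A c | Inr a \<Rightarrow> a)\<rparr>"

definition sat_Diag :: "('f,'c) lang \<Rightarrow> ('f,'c,'a) alg \<Rightarrow> ('f, 'c + 'a, 'u) alg \<Rightarrow> bool" where
  "sat_Diag L A M \<longleftrightarrow>
     (\<forall>s t. wf_gterm (langA L A) s \<and> wf_gterm (langA L A) t \<longrightarrow>
        (geval (expandA A) s = geval (expandA A) t \<longrightarrow> geval M s = geval M t)
      \<and> (geval (expandA A) s \<noteq> geval (expandA A) t \<longrightarrow> geval M s \<noteq> geval M t))"

definition is_A_algebra :: "('f,'c) lang \<Rightarrow> ('f,'c,'a) alg \<Rightarrow> ('f, 'c + 'a, 'u) alg \<Rightarrow> bool" where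
  "is_A_algebra L A M \<longleftrightarrow> is_algebra (langA L A) M \<and> sat_Diag L A M"

text \<open>Flat atomic formulas: \<open>x = y\<close>, \<open>F(x_1,\<dots>,x_n) = x_0\<close>, \<open>x = c\<close>.
  A literal is a pair (polarity, atom): \<open>(True, a)\<close> is \<open>a\<close>, \<open>(False, a)\<close> is \<open>\<not> a\<close>.
  A conjunction of literals is represented by the set of its conjuncts.\<close>
datatype ('f,'c,'v) fatom = AEq 'v 'v | AOp 'f "'v list" 'v | ACst 'v 'c

type_synonym ('f,'c,'v) lit = "bool \<times> ('f,'c,'v) fatom"

fun atom_true :: "('f,'c,'u) alg \<Rightarrow> ('v \<Rightarrow> 'u) \<Rightarrow> ('f,'c,'v) fatom \<Rightarrow> bool" where
  "atom_true M h (AEq x y) = (h x = h y)"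
| "atom_true M h (AOp F xs y) = (fn M F (map h xs) = h y)"
| "atom_true M h (ACst x c) = (h x = cn M c)"

definition lit_true :: "('f,'c,'u) alg \<Rightarrow> ('v \<Rightarrow> 'u) \<Rightarrow> ('f,'c,'v) lit \<Rightarrow> bool" where
  "lit_true M h l \<longleftrightarrow> (if fst l then atom_true M h (snd l) else \<not> atom_true M h (snd l))"

definition fml_true :: "('f,'c,'u) alg \<Rightarrow> 'v set \<Rightarrow> ('v \<Rightarrow> 'u) \<Rightarrow> ('f,'c,'v) lit set \<Rightarrow> bool" where
  "fml_true M X h \<phi> \<longleftrightarrow> h ` X \<subseteq> univ M \<and> (\<forall>l\<in>\<phi>. lit_true M h l)"

definition realizable :: "('f,'c,'u) alg \<Rightarrow> 'v set \<Rightarrow> ('f,'c,'v) lit set \<Rightarrow> bool" where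
  "realizable M X \<phi> \<longleftrightarrow> (\<exists>h. fml_true M X h \<phi>)"

text \<open>Consistency: the formula has a model, i.e. is realizable in some \<open>L\<close>-algebra
  (models are taken with universe in a given type \<open>'u\<close>).\<close>
definition consistent_fml :: "'u itself \<Rightarrow> ('f,'c) lang \<Rightarrow> 'v set \<Rightarrow> ('f,'c,'v) lit set \<Rightarrow> bool" where
  "consistent_fml ty L X \<phi> \<longleftrightarrow> (\<exists>M :: ('f,'c,'u) alg. is_algebra L M \<and> realizable M X \<phi>)"

fun atom_over :: "('f,'c) lang \<Rightarrow> 'f set \<Rightarrow> 'c set \<Rightarrow> 'v set \<Rightarrow> ('f,'c,'v) fatom \<Rightarrow> bool" where
  "atom_over L Fs Cs X (AEq x y) = (x \<in> X \<and> y \<in> X)"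
| "atom_over L Fs Cs X (AOp F xs y) = (F \<in> Fs \<and> length xs = arity L F \<and> set xs \<subseteq> X \<and> y \<in> X)"
| "atom_over L Fs Cs X (ACst x c) = (c \<in> Cs \<and> x \<in> X)"

definition diagram_fml ::
  "('f,'c) lang \<Rightarrow> 'f set \<Rightarrow> 'c set \<Rightarrow> 'v set \<Rightarrow> ('f,'c,'v) lit set \<Rightarrow> bool" where
  "diagram_fml L Fs Cs X \<phi> \<longleftrightarrow>
     finite Fs \<and> finite Cs \<and> finite X \<and> Fs \<subseteq> ops L \<and> Cs \<subseteq> csts L
   \<and> (\<forall>l\<in>\<phi>. atom_over L Fs Cs X (snd l))
   \<and> (\<forall>x\<in>X. \<forall>y\<in>X. x \<noteq> y \<longrightarrow> (False, AEq x y) \<in> \<phi>)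
   \<and> (\<forall>F\<in>Fs. \<forall>xs x0. set xs \<subseteq> X \<and> length xs = arity L F \<and> x0 \<in> X \<longrightarrow>
        ((True, AOp F xs x0) \<in> \<phi> \<longleftrightarrow> (False, AOp F xs x0) \<notin> \<phi>))
   \<and> (\<forall>c\<in>Cs. \<forall>x\<in>X. ((True, ACst x c) \<in> \<phi> \<longleftrightarrow> (False, ACst x c) \<notin> \<phi>))"

fun rename_atom :: "('v \<Rightarrow> 'w) \<Rightarrow> ('f,'c,'v) fatom \<Rightarrow> ('f,'c,'w) fatom" where
  "rename_atom g (AEq x y) = AEq (g x) (g y)"
| "rename_atom g (AOp F xs y) = AOp F (map g xs) (g y)"
| "rename_atom g (ACst x c) = ACst (g x) c"

definition rename_lit :: "('v \<Rightarrow> 'w) \<Rightarrow> ('f,'c,'v) lit \<Rightarrow> ('f,'c,'w) lit" where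
  "rename_lit g l = (fst l, rename_atom g (snd l))"

record ('i,'f,'c,'v) dsys =
  idx   :: "'i set"
  leq   :: "'i \<Rightarrow> 'i \<Rightarrow> bool"
  rops  :: "'i \<Rightarrow> 'f set"
  rcsts :: "'i \<Rightarrow> 'c set"
  vars  :: "'i \<Rightarrow> 'v set"
  fml   :: "'i \<Rightarrow> ('f,'c,'v) lit set"
  gam   :: "'i \<Rightarrow> 'i \<Rightarrow> 'v \<Rightarrow> 'v"

definition directed :: "'i set \<Rightarrow> ('i \<Rightarrow> 'i \<Rightarrow> bool) \<Rightarrow> bool" where
  "directed I le \<longleftrightarrow> I \<noteq> {}
     \<and> (\<forall>i\<in>I. le i i)
     \<and> (\<forall>i\<in>I. \<forall>j\<in>I. \<forall>k\<in>I. le i j \<and> le j k \<longrightarrow> le i k)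
     \<and> (\<forall>i\<in>I. \<forall>j\<in>I. \<exists>k\<in>I. le i k \<and> le j k)"

definition direct_system :: "'u itself \<Rightarrow> ('f,'c) lang \<Rightarrow> ('i,'f,'c,'v) dsys \<Rightarrow> bool" where
  "direct_system ty L S \<longleftrightarrow>
     directed (idx S) (leq S)
   \<and> (\<forall>i\<in>idx S. diagram_fml L (rops S i) (rcsts S i) (vars S i) (fml S i)
                 \<and> consistent_fml ty L (vars S i) (fml S i))
   \<and> (\<forall>i\<in>idx S. \<forall>j\<in>idx S. leq S i j \<longrightarrow> gam S i j ` vars S i \<subseteq> vars S j)
   \<and> (\<forall>i\<in>idx S. \<forall>x\<in>vars S i. gam S i i x = x)
   \<and> (\<forall>i\<in>idx S. \<forall>j\<in>idx S. \<forall>k\<in>idx S. leq S i j \<and> leq S j k \<longrightarrow>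
        (\<forall>x\<in>vars S i. gam S j k (gam S i j x) = gam S i k x))
   \<and> (\<forall>i\<in>idx S. \<forall>j\<in>idx S. leq S i j \<longrightarrow> rename_lit (gam S i j) ` fml S i \<subseteq> fml S j)
   \<and> (\<forall>c\<in>csts L. \<exists>i\<in>idx S. \<exists>x. (True, ACst x c) \<in> fml S i)
   \<and> (\<forall>F\<in>ops L. \<forall>i\<in>idx S. \<forall>xs. set xs \<subseteq> vars S i \<and> length xs = arity L F \<longrightarrow>
        (\<exists>j\<in>idx S. leq S i j \<and> (\<exists>y. (True, AOp F (map (gam S i j) xs) y) \<in> fml S j)))"

definition lim_pairs :: "('i,'f,'c,'v) dsys \<Rightarrow> ('v \<times> 'i) set" where
  "lim_pairs S = {(x,i). i \<in> idx S \<and> x \<in> vars S i}"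

definition lim_equiv :: "('i,'f,'c,'v) dsys \<Rightarrow> ('v \<times> 'i) \<Rightarrow> ('v \<times> 'i) \<Rightarrow> bool" where
  "lim_equiv S p q \<longleftrightarrow> p \<in> lim_pairs S \<and> q \<in> lim_pairs S \<and>
     (\<exists>k\<in>idx S. leq S (snd p) k \<and> leq S (snd q) k \<and> gam S (snd p) k (fst p) = gam S (snd q) k (fst q))"

definition lim_class :: "('i,'f,'c,'v) dsys \<Rightarrow> ('v \<times> 'i) \<Rightarrow> ('v \<times> 'i) set" where
  "lim_class S p = {q. lim_equiv S p q}"

text \<open>The limit algebra \<open>L(\<Lambda>)\<close>: constants and operations read off from the conjuncts
  \<open>x = c\<close> and \<open>F(x_1,\<dots>,x_n) = x_0\<close> of the formulas of the system.\<close>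
definition limit_alg :: "('i,'f,'c,'v) dsys \<Rightarrow> ('f, 'c, ('v \<times> 'i) set) alg" where
  "limit_alg S =
    \<lparr>univ = lim_class S ` lim_pairs S,
     fn = (\<lambda>F cs. SOME C. \<exists>j\<in>idx S. \<exists>xs y. length xs = length cs
              \<and> (\<forall>k<length cs. (xs ! k, j) \<in> cs ! k)
              \<and> (True, AOp F xs y) \<in> fml S j \<and> C = lim_class S (y, j)),
     cn = (\<lambda>c. SOME C. \<exists>j\<in>idx S. \<exists>x. (True, ACst x c) \<in> fml S j \<and> C = lim_class S (x, j))\<rparr>"

end

theory Submission
  imports Defs
begin

text \<open>Every closed \<open>L_A\<close>-term \<open>t\<close> is eventually represented in the system: some stage \<open>i\<close> has a
  variable \<open>x\<close> which the conjuncts \<open>x = c\<close>, \<open>F(x\<^sub>1,\<dots>,x\<^sub>n) = x\<close> of \<open>\<phi>\<^sub>i\<close> tie to \<open>t\<close>, and the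
  value of \<open>t\<close> in the limit algebra is the class of \<open>(x, i)\<close>. A realization \<open>h\<close> of \<open>\<phi>\<^sub>i\<close> in \<open>B\<close>
  sends \<open>x\<close> to the value of \<open>t\<close> in \<open>B\<close>, and it is injective because \<open>\<phi>\<^sub>i\<close> contains \<open>x \<noteq> y\<close> for
  all distinct variables. Hence two closed terms are equal in the limit algebra exactly when
  they are equal in \<open>B\<close>, so the limit algebra satisfies \<open>Diag(A)\<close> because \<open>B\<close> does.\<close>

lemma fml_true_lit: "fml_true M X h \<phi> \<Longrightarrow> l \<in> \<phi> \<Longrightarrow> lit_true M h l"
  unfolding fml_true_def by blast

lemma fml_true_op: "fml_true M X h \<phi> \<Longrightarrow> (True, AOp F xs y) \<in> \<phi> \<Longrightarrow> fn M F (map h xs) = h y"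
  using fml_true_lit by (fastforce simp: lit_true_def)

lemma fml_true_cst: "fml_true M X h \<phi> \<Longrightarrow> (True, ACst x c) \<in> \<phi> \<Longrightarrow> h x = cn M c"
  using fml_true_lit by (fastforce simp: lit_true_def)

lemma fml_true_neq: "fml_true M X h \<phi> \<Longrightarrow> (False, AEq x y) \<in> \<phi> \<Longrightarrow> h x \<noteq> h y"
  using fml_true_lit by (fastforce simp: lit_true_def)

lemma map_eq_if_list_all2: "list_all2 (\<lambda>a b. f a = g b) xs ys \<Longrightarrow> map f xs = map g ys"
  by (induction rule: list_all2_induct) auto

locale realized_system =
  fixes ty :: "'w itself" and L :: "('f,'c) lang" and B :: "('f,'c,'u) alg"
    and S :: "('i,'f,'c,'v) dsys"
  assumes direct: "direct_system ty L S"
    and realized: "\<forall>i\<in>idx S. realizable B (vars S i) (fml S i)"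
begin

lemma directed_idx: "directed (idx S) (leq S)"
  using direct unfolding direct_system_def by (rule conjunct1)

lemma idx_nonempty: "idx S \<noteq> {}"
  using directed_idx unfolding directed_def by blast

lemma leq_refl: "i \<in> idx S \<Longrightarrow> leq S i i"
  using directed_idx unfolding directed_def by blast

lemma leq_trans: "\<lbrakk>i \<in> idx S; j \<in> idx S; k \<in> idx S; leq S i j; leq S j k\<rbrakk> \<Longrightarrow> leq S i k"
  using directed_idx unfolding directed_def by blast

lemma leq_upper_bound: "\<lbrakk>i \<in> idx S; j \<in> idx S\<rbrakk> \<Longrightarrow> \<exists>k\<in>idx S. leq S i k \<and> leq S j k"
  using directed_idx unfolding directed_def by blast

lemma finite_upper_bound: "\<lbrakk>finite K; K \<subseteq> idx S\<rbrakk> \<Longrightarrow> \<exists>m\<in>idx S. \<forall>k\<in>K. leq S k m"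
proof (induction K rule: finite_induct)
  case empty
  then show ?case using idx_nonempty by blast
next
  case (insert k K)
  then obtain m where m: "m \<in> idx S" "\<forall>k'\<in>K. leq S k' m" by auto
  obtain n where "n \<in> idx S" "leq S k n" "leq S m n"
    using leq_upper_bound[OF _ m(1)] insert.prems by auto
  then show ?case using m insert.prems leq_trans by blast
qed

lemma gam_in_vars: "\<lbrakk>i \<in> idx S; j \<in> idx S; leq S i j; x \<in> vars S i\<rbrakk> \<Longrightarrow> gam S i j x \<in> vars S j"
  using direct unfolding direct_system_def by (elim conjE) (simp add: image_subset_iff)

lemma gam_id: "\<lbrakk>i \<in> idx S; x \<in> vars S i\<rbrakk> \<Longrightarrow> gam S i i x = x"
  using direct unfolding direct_system_def by (elim conjE) simp

lemma gam_comp: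
  "\<lbrakk>i \<in> idx S; j \<in> idx S; k \<in> idx S; leq S i j; leq S j k; x \<in> vars S i\<rbrakk>
    \<Longrightarrow> gam S j k (gam S i j x) = gam S i k x"
  using direct unfolding direct_system_def by (elim conjE) simp

lemma gam_eq_lift:
  assumes "i \<in> idx S" "j \<in> idx S" "k \<in> idx S" "m \<in> idx S" "leq S i k" "leq S j k" "leq S k m"
    and "a \<in> vars S i" "b \<in> vars S j" "gam S i k a = gam S j k b"
  shows "gam S i m a = gam S j m b"
  using gam_comp[of i k m a] gam_comp[of j k m b] assms by simp

lemma fml_rename: "\<lbrakk>i \<in> idx S; j \<in> idx S; leq S i j; l \<in> fml S i\<rbrakk> \<Longrightarrow> rename_lit (gam S i j) l \<in> fml S j"
  using direct unfolding direct_system_def by (elim conjE) (simp add: image_subset_iff)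

lemma fml_rename_op:
  "\<lbrakk>i \<in> idx S; j \<in> idx S; leq S i j; (True, AOp F xs y) \<in> fml S i\<rbrakk>
    \<Longrightarrow> (True, AOp F (map (gam S i j) xs) (gam S i j y)) \<in> fml S j"
  using fml_rename[of i j "(True, AOp F xs y)"] by (simp add: rename_lit_def)

lemma fml_rename_cst:
  "\<lbrakk>i \<in> idx S; j \<in> idx S; leq S i j; (True, ACst x c) \<in> fml S i\<rbrakk>
    \<Longrightarrow> (True, ACst (gam S i j x) c) \<in> fml S j"
  using fml_rename[of i j "(True, ACst x c)"] by (simp add: rename_lit_def)

lemma cst_conjunct_exists: "c \<in> csts L \<Longrightarrow> \<exists>i\<in>idx S. \<exists>x. (True, ACst x c) \<in> fml S i"
  using direct unfolding direct_system_def by (elim conjE) simp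

lemma op_conjunct_exists:
  "\<lbrakk>F \<in> ops L; i \<in> idx S; set xs \<subseteq> vars S i; length xs = arity L F\<rbrakk>
    \<Longrightarrow> \<exists>j\<in>idx S. leq S i j \<and> (\<exists>y. (True, AOp F (map (gam S i j) xs) y) \<in> fml S j)"
  using direct unfolding direct_system_def by (elim conjE) simp

lemma fml_diagram: "i \<in> idx S \<Longrightarrow> diagram_fml L (rops S i) (rcsts S i) (vars S i) (fml S i)"
  using direct unfolding direct_system_def by (elim conjE) simp

lemma fml_atom_over:
  assumes "i \<in> idx S" "l \<in> fml S i"
  shows "atom_over L (rops S i) (rcsts S i) (vars S i) (snd l)"
  using fml_diagram[OF assms(1)] assms(2) unfolding diagram_fml_def by (elim conjE) simp

lemma fml_neq:
  assumes "i \<in> idx S" "x \<in> vars S i" "y \<in> vars S i" "x \<noteq> y"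
  shows "(False, AEq x y) \<in> fml S i"
  using fml_diagram[OF assms(1)] assms(2-) unfolding diagram_fml_def by (elim conjE) simp

lemma op_conjunct_vars: "\<lbrakk>i \<in> idx S; (b, AOp F xs y) \<in> fml S i\<rbrakk> \<Longrightarrow> set xs \<subseteq> vars S i \<and> y \<in> vars S i"
  using fml_atom_over[of i "(b, AOp F xs y)"] by simp

lemma cst_conjunct_vars: "\<lbrakk>i \<in> idx S; (b, ACst x c) \<in> fml S i\<rbrakk> \<Longrightarrow> x \<in> vars S i"
  using fml_atom_over[of i "(b, ACst x c)"] by simp

subsection \<open>Realizations in \<open>B\<close>\<close>

lemma obtain_realizer:
  assumes "i \<in> idx S"
  obtains h where "fml_true B (vars S i) h (fml S i)"
  using realized assms unfolding realizable_def by blast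

lemma realizer_inj_on:
  assumes i: "i \<in> idx S" and h: "fml_true B (vars S i) h (fml S i)"
  shows "inj_on h (vars S i)"
proof (rule inj_onI, rule ccontr)
  fix x y assume "x \<in> vars S i" "y \<in> vars S i" "h x = h y" "x \<noteq> y"
  then show False
    using fml_true_neq[OF h fml_neq[OF i]] by blast
qed

lemma op_conjunct_unique:
  assumes i: "i \<in> idx S" and "(True, AOp F xs y) \<in> fml S i" "(True, AOp F xs y') \<in> fml S i"
  shows "y = y'"
proof -
  obtain h where h: "fml_true B (vars S i) h (fml S i)" using obtain_realizer i .
  have "h y = h y'" using fml_true_op[OF h assms(2)] fml_true_op[OF h assms(3)] by simp
  then show ?thesis
    using realizer_inj_on[OF i h] op_conjunct_vars[OF i] assms(2,3) by (meson inj_onD)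
qed

lemma cst_conjunct_unique:
  assumes i: "i \<in> idx S" and "(True, ACst x c) \<in> fml S i" "(True, ACst x' c) \<in> fml S i"
  shows "x = x'"
proof -
  obtain h where h: "fml_true B (vars S i) h (fml S i)" using obtain_realizer i .
  have "h x = h x'" using fml_true_cst[OF h assms(2)] fml_true_cst[OF h assms(3)] by simp
  then show ?thesis
    using realizer_inj_on[OF i h] cst_conjunct_vars[OF i] assms(2,3) by (meson inj_onD)
qed

lemma gam_inj_on:
  assumes k: "k \<in> idx S" and m: "m \<in> idx S" "leq S k m"
  shows "inj_on (gam S k m) (vars S k)"
proof (rule inj_onI, rule ccontr)
  fix x y assume xy: "x \<in> vars S k" "y \<in> vars S k" "gam S k m x = gam S k m y" "x \<noteq> y"
  obtain h where h: "fml_true B (vars S m) h (fml S m)" using obtain_realizer m(1) .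
  have "(False, AEq (gam S k m x) (gam S k m y)) \<in> fml S m"
    using fml_rename[OF k m fml_neq[OF k xy(1,2,4)]] by (simp add: rename_lit_def)
  then show False using fml_true_neq[OF h] xy(3) by metis
qed

lemma lim_equiv_refl: "\<lbrakk>i \<in> idx S; x \<in> vars S i\<rbrakk> \<Longrightarrow> lim_equiv S (x, i) (x, i)"
  unfolding lim_equiv_def lim_pairs_def using leq_refl by auto

lemma lim_equiv_sym: "lim_equiv S p q \<Longrightarrow> lim_equiv S q p"
  unfolding lim_equiv_def by auto

lemma lim_equiv_trans:
  assumes pq: "lim_equiv S p q" and qr: "lim_equiv S q r"
  shows "lim_equiv S p r"
proof -
  obtain x i y j z l where pqr: "p = (x, i)" "q = (y, j)" "r = (z, l)" by (cases p, cases q, cases r)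
  have mem: "i \<in> idx S" "x \<in> vars S i" "j \<in> idx S" "y \<in> vars S j" "l \<in> idx S" "z \<in> vars S l"
    using pq qr unfolding pqr lim_equiv_def lim_pairs_def by auto
  obtain k1 where k1: "k1 \<in> idx S" "leq S i k1" "leq S j k1" "gam S i k1 x = gam S j k1 y"
    using pq unfolding pqr lim_equiv_def by auto
  obtain k2 where k2: "k2 \<in> idx S" "leq S j k2" "leq S l k2" "gam S j k2 y = gam S l k2 z"
    using qr unfolding pqr lim_equiv_def by auto
  obtain k where k: "k \<in> idx S" "leq S k1 k" "leq S k2 k" using leq_upper_bound[OF k1(1) k2(1)] by blast
  have "gam S i k x = gam S j k y" using gam_eq_lift[of i j k1 k x y] mem k1 k by blast
  also have "\<dots> = gam S l k z" using gam_eq_lift[of j l k2 k y z] mem k2 k by blast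
  finally have "gam S i k x = gam S l k z" .
  moreover have "leq S i k" "leq S l k" using leq_trans mem k1 k2 k by blast+
  ultimately show ?thesis using mem k(1) unfolding pqr lim_equiv_def lim_pairs_def by auto
qed

lemma lim_equiv_gam: "\<lbrakk>i \<in> idx S; j \<in> idx S; leq S i j; x \<in> vars S i\<rbrakk> \<Longrightarrow> lim_equiv S (x, i) (gam S i j x, j)"
  unfolding lim_equiv_def lim_pairs_def using gam_in_vars gam_id leq_refl by auto

lemma lim_class_eq_iff:
  assumes "p \<in> lim_pairs S"
  shows "lim_class S p = lim_class S q \<longleftrightarrow> lim_equiv S p q"
proof
  assume "lim_class S p = lim_class S q"
  moreover have "p \<in> lim_class S p"
    using assms lim_equiv_refl unfolding lim_class_def lim_pairs_def by auto
  ultimately show "lim_equiv S p q" using lim_equiv_sym unfolding lim_class_def by auto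
next
  assume "lim_equiv S p q"
  then show "lim_class S p = lim_class S q"
    unfolding lim_class_def using lim_equiv_sym lim_equiv_trans by blast
qed

lemma lim_class_gam:
  "\<lbrakk>i \<in> idx S; j \<in> idx S; leq S i j; x \<in> vars S i\<rbrakk> \<Longrightarrow> lim_class S (gam S i j x, j) = lim_class S (x, i)"
  using lim_class_eq_iff[of "(x, i)" "(gam S i j x, j)"] lim_equiv_gam unfolding lim_pairs_def by simp

lemma lim_equiv_lists_common_stage:
  "\<lbrakk>list_all2 (\<lambda>a b. lim_equiv S (a, i) (b, j)) xs ys; i \<in> idx S; j \<in> idx S\<rbrakk>
    \<Longrightarrow> \<exists>m\<in>idx S. leq S i m \<and> leq S j m \<and> map (gam S i m) xs = map (gam S j m) ys"
proof (induction rule: list_all2_induct)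
  case Nil
  then show ?case using leq_upper_bound by auto
next
  case (Cons a xs b ys)
  obtain k where k: "k \<in> idx S" "leq S i k" "leq S j k" "gam S i k a = gam S j k b"
    using Cons(1) unfolding lim_equiv_def by auto
  have ab: "a \<in> vars S i" "b \<in> vars S j" using Cons(1) unfolding lim_equiv_def lim_pairs_def by auto
  have vs: "set xs \<subseteq> vars S i" "set ys \<subseteq> vars S j"
    using Cons(2) by (induction rule: list_all2_induct) (auto simp: lim_equiv_def lim_pairs_def)
  obtain m0 where m0: "m0 \<in> idx S" "leq S i m0" "leq S j m0" "map (gam S i m0) xs = map (gam S j m0) ys"
    using Cons by auto
  obtain m where m: "m \<in> idx S" "leq S k m" "leq S m0 m" using leq_upper_bound[OF k(1) m0(1)] by blast
  have "map (gam S i m) xs = map (gam S m0 m) (map (gam S i m0) xs)"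
    using vs(1) gam_comp[OF Cons.prems(1) m0(1) m(1) m0(2) m(3)] by auto
  also have "\<dots> = map (gam S j m) ys"
    unfolding m0(4) using vs(2) gam_comp[OF Cons.prems(2) m0(1) m(1) m0(3) m(3)] by auto
  finally have "map (gam S i m) xs = map (gam S j m) ys" .
  moreover have "gam S i m a = gam S j m b" using gam_eq_lift[of i j k m a b] Cons.prems k m ab by blast
  moreover have "leq S i m" "leq S j m" using leq_trans Cons.prems k m by blast+
  ultimately show ?case using m(1) by auto
qed

subsection \<open>Constants and operations of the limit algebra\<close>

lemma limit_cn_class:
  assumes i: "i \<in> idx S" and cst: "(True, ACst x c) \<in> fml S i"
  shows "cn (limit_alg S) c = lim_class S (x, i)"
  unfolding limit_alg_def
proof (simp, rule some_equality)
  show "\<exists>j\<in>idx S. \<exists>x'. (True, ACst x' c) \<in> fml S j \<and> lim_class S (x, i) = lim_class S (x', j)"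
    using i cst by blast
next
  fix C assume "\<exists>j\<in>idx S. \<exists>x'. (True, ACst x' c) \<in> fml S j \<and> C = lim_class S (x', j)"
  then obtain j x' where j: "j \<in> idx S" "(True, ACst x' c) \<in> fml S j" "C = lim_class S (x', j)"
    by blast
  obtain k where k: "k \<in> idx S" "leq S i k" "leq S j k" using leq_upper_bound[OF i j(1)] by blast
  have "gam S i k x = gam S j k x'"
    using cst_conjunct_unique[OF k(1) fml_rename_cst[OF i k(1,2) cst] fml_rename_cst[OF j(1) k(1,3) j(2)]] .
  then show "C = lim_class S (x, i)"
    using lim_class_gam[OF i k(1,2)] lim_class_gam[OF j(1) k(1,3)] cst_conjunct_vars i cst j by metis
qed

lemma limit_fn_class:
  assumes i: "i \<in> idx S" and op: "(True, AOp F xs y) \<in> fml S i"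
  shows "fn (limit_alg S) F (map (\<lambda>z. lim_class S (z, i)) xs) = lim_class S (y, i)"
proof -
  define cs where "cs = map (\<lambda>z. lim_class S (z, i)) xs"
  have vars: "set xs \<subseteq> vars S i" "y \<in> vars S i" using op_conjunct_vars[OF i op] by auto
  have "(SOME C. \<exists>j\<in>idx S. \<exists>xs' y'. length xs' = length cs
          \<and> (\<forall>k<length cs. (xs' ! k, j) \<in> cs ! k)
          \<and> (True, AOp F xs' y') \<in> fml S j \<and> C = lim_class S (y', j)) = lim_class S (y, i)"
  proof (rule some_equality)
    have "\<forall>k<length cs. (xs ! k, i) \<in> cs ! k"
      using vars(1) lim_equiv_refl[OF i] unfolding cs_def lim_class_def by (auto simp: subset_iff)
    then show "\<exists>j\<in>idx S. \<exists>xs' y'. length xs' = length cs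
          \<and> (\<forall>k<length cs. (xs' ! k, j) \<in> cs ! k)
          \<and> (True, AOp F xs' y') \<in> fml S j \<and> lim_class S (y, i) = lim_class S (y', j)"
      using i op unfolding cs_def by auto
  next
    fix C assume "\<exists>j\<in>idx S. \<exists>xs' y'. length xs' = length cs
          \<and> (\<forall>k<length cs. (xs' ! k, j) \<in> cs ! k)
          \<and> (True, AOp F xs' y') \<in> fml S j \<and> C = lim_class S (y', j)"
    then obtain j xs' y' where j: "j \<in> idx S" "length xs' = length cs"
      "\<forall>k<length cs. (xs' ! k, j) \<in> cs ! k" "(True, AOp F xs' y') \<in> fml S j" "C = lim_class S (y', j)"
      by blast
    have "list_all2 (\<lambda>a b. lim_equiv S (a, i) (b, j)) xs xs'"
      using j(2,3) unfolding list_all2_conv_all_nth cs_def lim_class_def by auto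
    then obtain m where m: "m \<in> idx S" "leq S i m" "leq S j m" "map (gam S i m) xs = map (gam S j m) xs'"
      using lim_equiv_lists_common_stage i j(1) by blast
    have "(True, AOp F (map (gam S i m) xs) (gam S j m y')) \<in> fml S m"
      using fml_rename_op[OF j(1) m(1,3) j(4)] m(4) by simp
    then have "gam S i m y = gam S j m y'"
      using op_conjunct_unique[OF m(1) fml_rename_op[OF i m(1,2) op]] by blast
    then show "C = lim_class S (y, i)"
      using lim_class_gam[OF i m(1,2) vars(2)] lim_class_gam[OF j(1) m(1,3)] op_conjunct_vars[OF j(1,4)] j(5)
      by metis
  qed
  then show ?thesis unfolding cs_def limit_alg_def by simp
qed

lemma lim_classes_common_stage:
  assumes "set cs \<subseteq> lim_class S ` lim_pairs S"
  shows "\<exists>m\<in>idx S. \<exists>xs. set xs \<subseteq> vars S m \<and> cs = map (\<lambda>z. lim_class S (z, m)) xs"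
proof -
  have "\<forall>c\<in>set cs. \<exists>q. q \<in> lim_pairs S \<and> c = lim_class S q" using assms by blast
  then obtain p where p: "\<forall>c\<in>set cs. p c \<in> lim_pairs S \<and> c = lim_class S (p c)"
    by (rule bchoice[elim_format]) blast
  have "snd ` p ` set cs \<subseteq> idx S" using p unfolding lim_pairs_def by auto
  then obtain m where m: "m \<in> idx S" "\<forall>c\<in>set cs. leq S (snd (p c)) m"
    using finite_upper_bound[of "snd ` p ` set cs"] by auto
  let ?xs = "map (\<lambda>c. gam S (snd (p c)) m (fst (p c))) cs"
  have "set ?xs \<subseteq> vars S m"
    using p m gam_in_vars unfolding lim_pairs_def by (auto simp: case_prod_beta)
  moreover have "cs = map (\<lambda>z. lim_class S (z, m)) ?xs"
    unfolding map_map
  proof (rule map_idI[symmetric])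
    fix c assume "c \<in> set cs"
    then show "((\<lambda>z. lim_class S (z, m)) \<circ> (\<lambda>c. gam S (snd (p c)) m (fst (p c)))) c = c"
      using p m lim_class_gam unfolding lim_pairs_def by (auto simp: case_prod_beta)
  qed
  ultimately show ?thesis using m(1) by blast
qed

lemma limit_alg_is_algebra: "is_algebra L (limit_alg S)"
  unfolding is_algebra_def
proof (intro conjI ballI allI impI)
  fix F cs assume F: "F \<in> ops L" and cs: "set cs \<subseteq> univ (limit_alg S) \<and> length cs = arity L F"
  then have "set cs \<subseteq> lim_class S ` lim_pairs S" by (simp add: limit_alg_def)
  then obtain m xs where m: "m \<in> idx S" "set xs \<subseteq> vars S m" "cs = map (\<lambda>z. lim_class S (z, m)) xs"
    using lim_classes_common_stage by blast
  obtain j y where j: "j \<in> idx S" "leq S m j" "(True, AOp F (map (gam S m j) xs) y) \<in> fml S j"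
    using op_conjunct_exists[OF F m(1,2)] cs m(3) by auto
  have "cs = map (\<lambda>z. lim_class S (z, j)) (map (gam S m j) xs)"
    using m lim_class_gam[OF m(1) j(1,2)] by auto
  then have "fn (limit_alg S) F cs = lim_class S (y, j)" using limit_fn_class[OF j(1,3)] by simp
  then show "fn (limit_alg S) F cs \<in> univ (limit_alg S)"
    using op_conjunct_vars[OF j(1,3)] j(1) by (simp add: limit_alg_def lim_pairs_def)
next
  fix c assume "c \<in> csts L"
  then obtain j x where "j \<in> idx S" "(True, ACst x c) \<in> fml S j" using cst_conjunct_exists by blast
  then show "cn (limit_alg S) c \<in> univ (limit_alg S)"
    using limit_cn_class cst_conjunct_vars by (simp add: limit_alg_def lim_pairs_def)
qed

subsection \<open>Representing closed terms\<close>

inductive represents :: "('f,'c) gterm \<Rightarrow> 'i \<Rightarrow> 'v \<Rightarrow> bool" where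
  represents_cst: "(True, ACst x c) \<in> fml S i \<Longrightarrow> represents (GC c) i x"
| represents_op: "\<lbrakk>list_all2 (\<lambda>t x. represents t i x) ts xs; (True, AOp F xs x) \<in> fml S i\<rbrakk>
    \<Longrightarrow> represents (GA F ts) i x"

lemma represents_in_vars: "\<lbrakk>represents t i x; i \<in> idx S\<rbrakk> \<Longrightarrow> x \<in> vars S i"
  by (induction rule: represents.induct) (auto dest: op_conjunct_vars cst_conjunct_vars)

lemma represents_gam:
  "\<lbrakk>represents t i x; i \<in> idx S; j \<in> idx S; leq S i j\<rbrakk> \<Longrightarrow> represents t j (gam S i j x)"
proof (induction rule: represents.induct)
  case (represents_cst x c i)
  then show ?case using fml_rename_cst represents.represents_cst by blast
next
  case (represents_op i ts xs F x)
  have "list_all2 (\<lambda>t x. represents t j x) ts (map (gam S i j) xs)"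
    using represents_op(1) represents_op.prems by (auto simp: list_all2_map2 elim: list_all2_mono)
  then show ?case using represents.represents_op fml_rename_op represents_op by blast
qed

lemma represents_common_stage:
  assumes "\<forall>t\<in>set ts. \<exists>i\<in>idx S. \<exists>x. represents t i x"
  shows "\<exists>m\<in>idx S. \<exists>xs. list_all2 (\<lambda>t x. represents t m x) ts xs"
proof -
  have "\<forall>t\<in>set ts. \<exists>q. fst q \<in> idx S \<and> represents t (fst q) (snd q)"
    using assms by (metis fst_conv snd_conv)
  then obtain p where p: "\<forall>t\<in>set ts. fst (p t) \<in> idx S \<and> represents t (fst (p t)) (snd (p t))"
    by (rule bchoice[elim_format]) blast
  have "fst ` p ` set ts \<subseteq> idx S" using p by auto
  then obtain m where m: "m \<in> idx S" "\<forall>t\<in>set ts. leq S (fst (p t)) m"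
    using finite_upper_bound[of "fst ` p ` set ts"] by auto
  have "list_all2 (\<lambda>t x. represents t m x) ts (map (\<lambda>t. gam S (fst (p t)) m (snd (p t))) ts)"
    using p m represents_gam by (auto simp: list_all2_map2 list_all2_same)
  then show ?thesis using m(1) by blast
qed

lemma represents_exists: "wf_gterm L t \<Longrightarrow> \<exists>i\<in>idx S. \<exists>x. represents t i x"
proof (induction t)
  case (GC c)
  then show ?case using cst_conjunct_exists represents_cst by fastforce
next
  case (GA F ts)
  then obtain m xs where m: "m \<in> idx S" "list_all2 (\<lambda>t x. represents t m x) ts xs"
    using represents_common_stage by fastforce
  have "set xs \<subseteq> vars S m"
    using m(2) by (induction rule: list_all2_induct) (auto intro: represents_in_vars m(1))
  moreover have "length xs = arity L F" "F \<in> ops L"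
    using list_all2_lengthD[OF m(2)] GA.prems by auto
  ultimately
  obtain j y where j: "j \<in> idx S" "leq S m j" "(True, AOp F (map (gam S m j) xs) y) \<in> fml S j"
    using op_conjunct_exists m(1) by blast
  have "list_all2 (\<lambda>t x. represents t j x) ts (map (gam S m j) xs)"
    using m j represents_gam by (auto simp: list_all2_map2 elim: list_all2_mono)
  then show ?case using represents_op j by blast
qed

lemma represents_geval_realizer:
  "\<lbrakk>represents t i x; fml_true B (vars S i) h (fml S i)\<rbrakk> \<Longrightarrow> h x = geval B t"
proof (induction rule: represents.induct)
  case (represents_cst x c i)
  then show ?case using fml_true_cst by fastforce
next
  case (represents_op i ts xs F x)
  have "list_all2 (\<lambda>t z. geval B t = h z) ts xs"
    using represents_op(1,3) by (auto elim: list_all2_mono)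
  then have "map (geval B) ts = map h xs" by (rule map_eq_if_list_all2)
  then show ?case using fml_true_op[OF represents_op(3,2)] by simp
qed

lemma represents_geval_limit:
  "\<lbrakk>represents t i x; i \<in> idx S\<rbrakk> \<Longrightarrow> geval (limit_alg S) t = lim_class S (x, i)"
proof (induction rule: represents.induct)
  case (represents_cst x c i)
  then show ?case using limit_cn_class by simp
next
  case (represents_op i ts xs F x)
  have "list_all2 (\<lambda>t z. geval (limit_alg S) t = lim_class S (z, i)) ts xs"
    using represents_op(1,3) by (auto elim: list_all2_mono)
  then have "map (geval (limit_alg S)) ts = map (\<lambda>z. lim_class S (z, i)) xs"
    by (rule map_eq_if_list_all2)
  then show ?case using limit_fn_class[OF represents_op(3,2)] by simp
qed

lemma lim_class_same_stage_eq_iff: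
  assumes "k \<in> idx S" "x \<in> vars S k" "y \<in> vars S k"
  shows "lim_class S (x, k) = lim_class S (y, k) \<longleftrightarrow> x = y"
  using lim_class_eq_iff[of "(x, k)" "(y, k)"] gam_inj_on assms
  unfolding lim_equiv_def lim_pairs_def by (auto dest: inj_onD)

lemma limit_geval_eq_iff:
  assumes "wf_gterm L s" "wf_gterm L t"
  shows "geval (limit_alg S) s = geval (limit_alg S) t \<longleftrightarrow> geval B s = geval B t"
proof -
  obtain i x j y where rep: "i \<in> idx S" "represents s i x" "j \<in> idx S" "represents t j y"
    using represents_exists assms by meson
  obtain k where k: "k \<in> idx S" "leq S i k" "leq S j k" using leq_upper_bound[OF rep(1,3)] by blast
  define x' y' where "x' = gam S i k x" and "y' = gam S j k y"
  have rep_k: "represents s k x'" "represents t k y'"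
    unfolding x'_def y'_def using represents_gam rep k by blast+
  have vars: "x' \<in> vars S k" "y' \<in> vars S k" using represents_in_vars rep_k k(1) by blast+
  obtain h where h: "fml_true B (vars S k) h (fml S k)" using obtain_realizer k(1) .
  have "geval (limit_alg S) s = geval (limit_alg S) t \<longleftrightarrow> lim_class S (x', k) = lim_class S (y', k)"
    using represents_geval_limit rep_k k(1) by simp
  also have "\<dots> \<longleftrightarrow> x' = y'" using lim_class_same_stage_eq_iff k(1) vars by blast
  also have "\<dots> \<longleftrightarrow> h x' = h y'" using realizer_inj_on[OF k(1) h] vars by (auto dest: inj_onD)
  also have "\<dots> \<longleftrightarrow> geval B s = geval B t" using represents_geval_realizer rep_k h by simp
  finally show ?thesis .
qed

end

theorem mainTheorem14:
  fixes L :: "('f,'c) lang"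
    and A :: "('f,'c,'a) alg"
    and B :: "('f,'c + 'a,'u) alg"
    and S :: "('i,'f,'c + 'a,'v) dsys"
  assumes "is_algebra L A"
    and "is_A_algebra L A B"
    and "direct_system TYPE('u) (langA L A) S"
    and "\<forall>i\<in>idx S. realizable B (vars S i) (fml S i)"
  shows "is_A_algebra L A (limit_alg S)"
proof -
  interpret realized_system "TYPE('u)" "langA L A" B S
    using assms(3,4) by unfold_locales
  have "sat_Diag L A (limit_alg S)"
    using assms(2) limit_geval_eq_iff unfolding is_A_algebra_def sat_Diag_def by metis
  then show ?thesis using limit_alg_is_algebra unfolding is_A_algebra_def by blast
qed

end
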